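(* (i) For integers $p\geq 0$, $k\geq p+1$ and $n\geq 2k-p+2$, $\rho(M_{n,n-1}^{k-p,n-k-1})>\rho(M_{n,n-1}^{n-k-1,k-p})$. (ii) For integers $p\geq 0$, $k\geq p+2$ and $n\geq 2k-p+2$, $\rho(M_{n,n-1}^{n-k,k-p-1})>\rho(M_{n,n-1}^{k-p,n-k-1})$.
   Context: $\rho$ denotes the largest eigenvalue of the adjacency matrix. $M_{n,m}^{s,t}$: bipartite graph with parts $X=X_1\cup X_2$, $Y=Y_1\cup Y_2$, $|X_1|=s$, $|X_2|=n-s$, $|Y_1|=m-t$, $|Y_2|=t$; edges are all pairs between $X_1$ and $Y_1$, between $X_2$ and $Y_1$, and between $X_2$ and $Y_2$. *)

theory Defs
  imports "Jordan_Normal_Form.Char_Poly"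
begin

text \<open>Vertices of M_{n,m}^{s,t} are indexed 0..n+m-1:
  X1 = [0,s), X2 = [s,n), Y1 = [n, n+m-t), Y2 = [n+m-t, n+m).
  Edges: X1--Y1, X2--Y1, X2--Y2.\<close>

definition M_edge :: "nat \<Rightarrow> nat \<Rightarrow> nat \<Rightarrow> nat \<Rightarrow> nat \<Rightarrow> nat \<Rightarrow> bool" where
  "M_edge n m s t i j \<longleftrightarrow>
     (let inX1 = (\<lambda>v. v < s);
          inX2 = (\<lambda>v. s \<le> v \<and> v < n);
          inY1 = (\<lambda>v. n \<le> v \<and> v < n + m - t);
          inY2 = (\<lambda>v. n + m - t \<le> v \<and> v < n + m);
          E = (\<lambda>a b. (inX1 a \<and> inY1 b) \<or> (inX2 a \<and> inY1 b) \<or> (inX2 a \<and> inY2 b))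
      in E i j \<or> E j i)"

definition M_adj :: "nat \<Rightarrow> nat \<Rightarrow> nat \<Rightarrow> nat \<Rightarrow> real mat" where
  "M_adj n m s t = mat (n + m) (n + m) (\<lambda>(i, j). if M_edge n m s t i j then 1 else 0)"

definition rho :: "real mat \<Rightarrow> real" where
  "rho A = Max {x. eigenvalue A x}"

end

theory Submission
  imports Defs
begin

text \<open>Write a, b, c, d for the sizes of X1, X2, Y1, Y2. Summing the equation A v = x v over
  each of the four blocks shows that for x \<noteq> 0 the number x^2 is an eigenvalue of the
  2 x 2 matrix Q = [[c a, c b], [c a, c b + d b]] by which A^2 acts on vectors constant on
  X1 and X2; conversely, an eigenvector of Q extends to an eigenvector of A that is constant
  on the blocks. Hence \<rho> is the square root of the larger root of
  \<mu>^2 - (c (a + b) + d b) \<mu> + a b c d, which grows when the trace grows and the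
  determinant drops. Swapping the parameters (s, t) to (t, s) keeps the trace and raises the
  determinant by s t (t - s) (n - m), giving (i); for m = n - 1, passing from (s, t) to
  (t + 1, s - 1) raises the trace by t - s + 1 and lowers the determinant by
  (n - s) (n - t - 1) (t - s + 1), giving (ii).\<close>

lemma M_edge_iff:
  assumes "s \<le> n" "t \<le> m" "i < n + m" "j < n + m"
  shows "M_edge n m s t i j \<longleftrightarrow>
     (i < n \<and> n \<le> j \<and> j < n + (m - t)) \<or> (s \<le> i \<and> i < n \<and> n + (m - t) \<le> j)
   \<or> (j < n \<and> n \<le> i \<and> i < n + (m - t)) \<or> (s \<le> j \<and> j < n \<and> n + (m - t) \<le> i)"
  using assms unfolding M_edge_def Let_def by auto

lemma M_adj_mult_vec_nth:
  fixes v :: "real vec"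
  assumes st: "s \<le> n" "t \<le> m" and v: "v \<in> carrier_vec (n + m)" and i: "i < n + m"
  shows "(M_adj n m s t *\<^sub>v v) $ i =
    (if i < s then (\<Sum>j = n..<n + (m - t). v $ j)
     else if i < n then (\<Sum>j = n..<n + (m - t). v $ j) + (\<Sum>j = n + (m - t)..<n + m. v $ j)
     else if i < n + (m - t) then (\<Sum>j = 0..<s. v $ j) + (\<Sum>j = s..<n. v $ j)
     else (\<Sum>j = s..<n. v $ j))"
proof -
  let ?E = "M_edge n m s t"
  have "(M_adj n m s t *\<^sub>v v) $ i = (\<Sum>j = 0..<n + m. if ?E i j then v $ j else 0)"
    using v i by (simp add: M_adj_def scalar_prod_def if_distrib[of "\<lambda>c. c * _"] cong: if_cong)
  also have "\<dots> = (\<Sum>j\<in>{j \<in> {0..<n + m}. ?E i j}. v $ j)"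
    by (rule sum.inter_filter[symmetric]) simp
  finally have neighbours: "(M_adj n m s t *\<^sub>v v) $ i = (\<Sum>j\<in>{j \<in> {0..<n + m}. ?E i j}. v $ j)" .
  have E: "\<And>j. j \<in> {0..<n + m} \<Longrightarrow> ?E i j \<longleftrightarrow>
     (i < n \<and> n \<le> j \<and> j < n + (m - t)) \<or> (s \<le> i \<and> i < n \<and> n + (m - t) \<le> j)
   \<or> (j < n \<and> n \<le> i \<and> i < n + (m - t)) \<or> (s \<le> j \<and> j < n \<and> n + (m - t) \<le> i)"
    using M_edge_iff[OF st i] by auto
  consider "i < s" | "s \<le> i" "i < n" | "n \<le> i" "i < n + (m - t)" | "n + (m - t) \<le> i"
    by linarith
  then show ?thesis
  proof cases
    case 1
    then have "{j \<in> {0..<n + m}. ?E i j} = {n..<n + (m - t)}" using st E by auto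
    then show ?thesis using neighbours 1 st by simp
  next
    case 2
    then have "{j \<in> {0..<n + m}. ?E i j} = {n..<n + (m - t)} \<union> {n + (m - t)..<n + m}"
      using st E by auto
    then show ?thesis using neighbours 2 st by (simp add: sum.union_disjoint)
  next
    case 3
    then have "{j \<in> {0..<n + m}. ?E i j} = {0..<s} \<union> {s..<n}" using st E by auto
    then show ?thesis using neighbours 3 st by (simp add: sum.union_disjoint)
  next
    case 4
    then have "{j \<in> {0..<n + m}. ?E i j} = {s..<n}" using st E i by auto
    then show ?thesis using neighbours 4 st by simp
  qed
qed

definition larger_root :: "real \<Rightarrow> real \<Rightarrow> real" where
  "larger_root T P = (T + sqrt (T\<^sup>2 - 4 * P)) / 2"

lemma larger_root_is_root:
  assumes "4 * P \<le> T\<^sup>2"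
  shows "(larger_root T P)\<^sup>2 - T * larger_root T P + P = 0"
proof -
  have "(sqrt (T\<^sup>2 - 4 * P))\<^sup>2 = T\<^sup>2 - 4 * P" using assms by simp
  then show ?thesis unfolding larger_root_def by (simp add: power2_eq_square field_simps)
qed

lemma le_larger_root:
  assumes "\<mu>\<^sup>2 - T * \<mu> + P = 0"
  shows "\<mu> \<le> larger_root T P"
proof -
  have "T\<^sup>2 - 4 * P = (2 * \<mu> - T)\<^sup>2" using assms by (simp add: power2_eq_square algebra_simps)
  then have "2 * \<mu> - T \<le> sqrt (T\<^sup>2 - 4 * P)" by simp
  then show ?thesis unfolding larger_root_def by simp
qed

lemma half_le_larger_root:
  assumes "4 * P \<le> T\<^sup>2"
  shows "T / 2 \<le> larger_root T P"
  using assms unfolding larger_root_def by simp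

lemma larger_root_strict_mono:
  assumes "T' \<le> T" "0 \<le> T'" "P < P'"
  shows "larger_root T' P' < larger_root T P"
proof -
  have "T'\<^sup>2 \<le> T\<^sup>2" using assms by (intro power_mono) auto
  then have "sqrt (T'\<^sup>2 - 4 * P') < sqrt (T\<^sup>2 - 4 * P)" using assms(3) by simp
  then show ?thesis unfolding larger_root_def using assms(1)
    by (intro divide_strict_right_mono add_le_less_mono) auto
qed

lemma quotient_discriminant_nonneg:
  fixes a b c d :: real
  assumes "0 \<le> a" "0 \<le> b" "0 \<le> c" "0 \<le> d"
  shows "4 * (a * b * c * d) \<le> (c * (a + b) + d * b)\<^sup>2"
proof -
  have "(c * (a + b) + d * b)\<^sup>2 - 4 * (a * b * c * d) = (c * a - (c * b + d * b))\<^sup>2 + 4 * (c * a) * (c * b)"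
    by (simp add: power2_eq_square algebra_simps)
  also have "\<dots> \<ge> 0" using assms by simp
  finally show ?thesis by simp
qed

lemma quotient_eigenvalue_root:
  fixes a b c d \<mu> y z :: real
  assumes eq1: "\<mu> * y = c * (a * y + b * z)"
    and eq2: "\<mu> * z = c * (a * y + b * z) + d * b * z"
    and nonzero: "y \<noteq> 0 \<or> z \<noteq> 0"
  shows "\<mu>\<^sup>2 - (c * (a + b) + d * b) * \<mu> + a * b * c * d = 0"
proof -
  \<comment> \<open>?q is the characteristic polynomial of Q, and ?q (y, z) = adj(\<mu> - Q) (\<mu> - Q) (y, z)\<close>
  let ?q = "\<mu>\<^sup>2 - (c * (a + b) + d * b) * \<mu> + a * b * c * d"
  have "?q * y = (\<mu> - c * b - d * b) * (\<mu> * y - c * (a * y + b * z))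
      + c * b * (\<mu> * z - c * (a * y + b * z) - d * b * z)"
    "?q * z = c * a * (\<mu> * y - c * (a * y + b * z))
      + (\<mu> - c * a) * (\<mu> * z - c * (a * y + b * z) - d * b * z)"
    by (simp_all add: power2_eq_square algebra_simps)
  then show ?thesis using eq1 eq2 nonzero by auto
qed

lemma quotient_eigenvector_of_root:
  fixes a b c d \<mu> :: real
  assumes "\<mu>\<^sup>2 - (c * (a + b) + d * b) * \<mu> + a * b * c * d = 0"
  shows "\<mu> * (c * b) = c * (a * (c * b) + b * (\<mu> - c * a))"
    and "\<mu> * (\<mu> - c * a) = c * (a * (c * b) + b * (\<mu> - c * a)) + d * b * (\<mu> - c * a)"
  using assms by (simp_all add: power2_eq_square algebra_simps)

lemma eigenvalue_M_adj_imp_quotient: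
  assumes st: "s \<le> n" "t \<le> m" and ev: "eigenvalue (M_adj n m s t) x" and x: "x \<noteq> 0"
  obtains y z where
    "x\<^sup>2 * y = real (m - t) * (real s * y + real (n - s) * z)"
    "x\<^sup>2 * z = real (m - t) * (real s * y + real (n - s) * z) + real t * real (n - s) * z"
    "y \<noteq> 0 \<or> z \<noteq> 0"
proof -
  have "dim_row (M_adj n m s t) = n + m" by (simp add: M_adj_def)
  then obtain v where v: "v \<in> carrier_vec (n + m)" "v \<noteq> 0\<^sub>v (n + m)"
      "M_adj n m s t *\<^sub>v v = x \<cdot>\<^sub>v v"
    using ev unfolding eigenvalue_def eigenvector_def by auto
  define SX1 where "SX1 = (\<Sum>j = 0..<s. v $ j)"
  define SX2 where "SX2 = (\<Sum>j = s..<n. v $ j)"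
  define SY1 where "SY1 = (\<Sum>j = n..<n + (m - t). v $ j)"
  define SY2 where "SY2 = (\<Sum>j = n + (m - t)..<n + m. v $ j)"
  have row: "x * v $ i =
      (if i < s then SY1 else if i < n then SY1 + SY2 else if i < n + (m - t) then SX1 + SX2 else SX2)"
    if "i < n + m" for i
    using v M_adj_mult_vec_nth[OF st v(1) that] that
    unfolding SX1_def SX2_def SY1_def SY2_def by simp
  have block_sum: "x * (\<Sum>j = l..<u. v $ j) = real (u - l) * r"
    if "u \<le> n + m" "\<And>i. l \<le> i \<Longrightarrow> i < u \<Longrightarrow> x * v $ i = r" for l u r
    using that by (simp add: sum_distrib_left)
  have "x * SX1 = real (s - 0) * SY1" unfolding SX1_def by (rule block_sum) (use st row in auto)
  moreover have "x * SX2 = real (n - s) * (SY1 + SY2)"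
    unfolding SX2_def by (rule block_sum) (use st row in auto)
  moreover have "x * SY1 = real (n + (m - t) - n) * (SX1 + SX2)"
    unfolding SY1_def by (rule block_sum) (use st row in auto)
  moreover have "x * SY2 = real (n + m - (n + (m - t))) * SX2"
    unfolding SY2_def by (rule block_sum) (use st row in auto)
  ultimately have X1: "x * SX1 = real s * SY1" and X2: "x * SX2 = real (n - s) * (SY1 + SY2)"
    and Y1: "x * SY1 = real (m - t) * (SX1 + SX2)" and Y2: "x * SY2 = real t * SX2"
    using st by simp_all
  show thesis
  proof
    have "x\<^sup>2 * SY1 = real (m - t) * (x * SX1 + x * SX2)"
      unfolding power2_eq_square mult.assoc Y1 by (simp add: algebra_simps)
    then show "x\<^sup>2 * SY1 = real (m - t) * (real s * SY1 + real (n - s) * (SY1 + SY2))"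
      unfolding X1 X2 .
    have "x\<^sup>2 * (SY1 + SY2) = real (m - t) * (x * SX1 + x * SX2) + real t * (x * SX2)"
      unfolding power2_eq_square mult.assoc distrib_left Y1 Y2 by (simp add: algebra_simps)
    then show "x\<^sup>2 * (SY1 + SY2) = real (m - t) * (real s * SY1 + real (n - s) * (SY1 + SY2))
        + real t * real (n - s) * (SY1 + SY2)"
      unfolding X1 X2 by simp
    show "SY1 \<noteq> 0 \<or> SY1 + SY2 \<noteq> 0"
    proof (rule ccontr)
      assume "\<not> (SY1 \<noteq> 0 \<or> SY1 + SY2 \<noteq> 0)"
      then have "SX1 = 0" "SX2 = 0" "SY1 = 0" "SY2 = 0" using X1 X2 x by auto
      then have "x * v $ i = 0" if "i < n + m" for i using row[OF that] by simp
      then have "v = 0\<^sub>v (n + m)" using v(1) x by (intro eq_vecI) auto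
      then show False using v(2) by simp
    qed
  qed
qed

lemma eigenvalue_M_adj_if_quotient:
  assumes st: "s \<le> n" "t < m" and x: "x \<noteq> 0"
    and eq1: "x\<^sup>2 * y = real (m - t) * (real s * y + real (n - s) * z)"
    and eq2: "x\<^sup>2 * z = real (m - t) * (real s * y + real (n - s) * z) + real t * real (n - s) * z"
    and nonzero: "real s * y + real (n - s) * z \<noteq> 0"
  shows "eigenvalue (M_adj n m s t) x"
proof -
  define w1 where "w1 = (real s * y + real (n - s) * z) / x"
  define w2 where "w2 = real (n - s) * z / x"
  define v where "v = vec (n + m)
    (\<lambda>i. if i < s then y else if i < n then z else if i < n + (m - t) then w1 else w2)"
  have v: "v \<in> carrier_vec (n + m)" unfolding v_def by simp
  have block_sum: "(\<Sum>j = l..<u. v $ j) = real (u - l) * r"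
    if "u \<le> n + m" "\<And>i. l \<le> i \<Longrightarrow> i < u \<Longrightarrow> v $ i = r" for l u r
    using that by simp
  have "(\<Sum>j = 0..<s. v $ j) = real (s - 0) * y" "(\<Sum>j = s..<n. v $ j) = real (n - s) * z"
    "(\<Sum>j = n..<n + (m - t). v $ j) = real (n + (m - t) - n) * w1"
    "(\<Sum>j = n + (m - t)..<n + m. v $ j) = real (n + m - (n + (m - t))) * w2"
    using st by (intro block_sum; auto simp: v_def)+
  then have sums: "(\<Sum>j = 0..<s. v $ j) = real s * y" "(\<Sum>j = s..<n. v $ j) = real (n - s) * z"
    "(\<Sum>j = n..<n + (m - t). v $ j) = real (m - t) * w1"
    "(\<Sum>j = n + (m - t)..<n + m. v $ j) = real t * w2"
    using st by simp_all
  have X1: "real (m - t) * w1 = x * y"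
    using eq1 x unfolding w1_def by (simp add: power2_eq_square field_simps)
  have X2: "real (m - t) * w1 + real t * w2 = x * z"
    using eq2 x unfolding w1_def w2_def by (simp add: power2_eq_square field_simps)
  have Y: "real s * y + real (n - s) * z = x * w1" "real (n - s) * z = x * w2"
    using x unfolding w1_def w2_def by simp_all
  have "M_adj n m s t *\<^sub>v v = x \<cdot>\<^sub>v v"
  proof (rule eq_vecI)
    fix i assume "i < dim_vec (x \<cdot>\<^sub>v v)"
    then have i: "i < n + m" by (simp add: v_def)
    have "(M_adj n m s t *\<^sub>v v) $ i = (if i < s then real (m - t) * w1
        else if i < n then real (m - t) * w1 + real t * w2
        else if i < n + (m - t) then real s * y + real (n - s) * z else real (n - s) * z)"
      using M_adj_mult_vec_nth[OF st(1) less_imp_le[OF st(2)] v i] st unfolding sums by simp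
    moreover have "(x \<cdot>\<^sub>v v) $ i = x * (if i < s then y else if i < n then z
        else if i < n + (m - t) then w1 else w2)"
      using i by (simp add: v_def)
    ultimately show "(M_adj n m s t *\<^sub>v v) $ i = (x \<cdot>\<^sub>v v) $ i"
      using X1 X2 Y st by simp
  qed (simp add: M_adj_def v_def)
  moreover have "v \<noteq> 0\<^sub>v (n + m)"
  proof
    assume "v = 0\<^sub>v (n + m)"
    moreover have "v $ n = w1" using st unfolding v_def by auto
    ultimately have "w1 = 0" using st by simp
    then show False using nonzero x unfolding w1_def by simp
  qed
  ultimately show ?thesis
    using v unfolding eigenvalue_def eigenvector_def by (auto simp: M_adj_def)
qed

definition M_quotient_root :: "nat \<Rightarrow> nat \<Rightarrow> nat \<Rightarrow> nat \<Rightarrow> real" where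
  "M_quotient_root n m s t =
     larger_root (real (m - t) * (real s + real (n - s)) + real t * real (n - s))
       (real s * real (n - s) * real (m - t) * real t)"

lemma M_quotient_root_ge:
  "(real (m - t) * (real s + real (n - s)) + real t * real (n - s)) / 2 \<le> M_quotient_root n m s t"
  unfolding M_quotient_root_def by (intro half_le_larger_root quotient_discriminant_nonneg) auto

lemma eigenvalue_M_adj_le:
  assumes "s \<le> n" "t \<le> m" "eigenvalue (M_adj n m s t) x"
  shows "x \<le> sqrt (M_quotient_root n m s t)"
proof (cases "x \<le> 0")
  case True
  have "0 \<le> (real (m - t) * (real s + real (n - s)) + real t * real (n - s)) / 2" by simp
  then have "0 \<le> M_quotient_root n m s t" using M_quotient_root_ge order_trans by blast
  then show ?thesis using True real_sqrt_ge_zero order_trans by blast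
next
  case False
  then have "x \<noteq> 0" by simp
  with assms obtain y z where
    "x\<^sup>2 * y = real (m - t) * (real s * y + real (n - s) * z)"
    "x\<^sup>2 * z = real (m - t) * (real s * y + real (n - s) * z) + real t * real (n - s) * z"
    "y \<noteq> 0 \<or> z \<noteq> 0"
    by (rule eigenvalue_M_adj_imp_quotient)
  then have "x\<^sup>2 \<le> M_quotient_root n m s t"
    unfolding M_quotient_root_def by (intro le_larger_root quotient_eigenvalue_root)
  then show ?thesis using False real_le_rsqrt by simp
qed

lemma eigenvalue_M_adj_sqrt_quotient_root:
  assumes "s < n" "t < m"
  shows "eigenvalue (M_adj n m s t) (sqrt (M_quotient_root n m s t))"
proof -
  define a where "a = real s"
  define b where "b = real (n - s)"
  define c where "c = real (m - t)"
  define d where "d = real t"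
  define \<mu> where "\<mu> = M_quotient_root n m s t"
  have "0 < b" "0 < c" using assms unfolding b_def c_def by auto
  then have "0 < (c * (a + b) + d * b) / 2" unfolding a_def d_def by (simp add: add_pos_nonneg)
  also have "\<dots> \<le> \<mu>" using M_quotient_root_ge unfolding \<mu>_def a_def b_def c_def d_def .
  finally have "0 < \<mu>" .
  have "\<mu>\<^sup>2 - (c * (a + b) + d * b) * \<mu> + a * b * c * d = 0"
    unfolding \<mu>_def M_quotient_root_def a_def b_def c_def d_def
    by (intro larger_root_is_root quotient_discriminant_nonneg) auto
  note quotient = quotient_eigenvector_of_root[OF this]
  show ?thesis
  proof (rule eigenvalue_M_adj_if_quotient[where y = "c * b" and z = "\<mu> - c * a"])
    show "real s * (c * b) + real (n - s) * (\<mu> - c * a) \<noteq> 0"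
      using \<open>0 < b\<close> \<open>0 < \<mu>\<close> unfolding a_def b_def by (simp add: algebra_simps)
  qed (use assms \<open>0 < \<mu>\<close> quotient in \<open>simp_all add: \<mu>_def a_def b_def c_def d_def\<close>)
qed

lemma finite_eigenvalues:
  fixes A :: "'a :: field mat"
  assumes "A \<in> carrier_mat n n"
  shows "finite {x. eigenvalue A x}"
proof -
  have "char_poly A \<noteq> 0" using degree_monic_char_poly[OF assms] by auto
  then show ?thesis using eigenvalue_root_char_poly[OF assms] poly_roots_finite by simp
qed

lemma rho_M_adj:
  assumes "s < n" "t < m"
  shows "rho (M_adj n m s t) = sqrt (M_quotient_root n m s t)"
  unfolding rho_def
proof (rule Max_eqI)
  show "finite {x. eigenvalue (M_adj n m s t) x}"
    by (rule finite_eigenvalues[of _ "n + m"]) (simp add: M_adj_def)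
qed (use assms eigenvalue_M_adj_le eigenvalue_M_adj_sqrt_quotient_root in auto)

lemma rho_M_adj_swap_lt:
  assumes "m < n" "0 < s" "s < t" "t < m"
  shows "rho (M_adj n m t s) < rho (M_adj n m s t)"
proof -
  have casts: "real (n - s) = real n - real s" "real (n - t) = real n - real t"
    "real (m - s) = real m - real s" "real (m - t) = real m - real t"
    using assms by (simp_all add: of_nat_diff)
  have "real (m - s) * (real t + real (n - t)) + real s * real (n - t)
      = real (m - t) * (real s + real (n - s)) + real t * real (n - s)"
    unfolding casts by (simp add: algebra_simps)
  moreover have "real t * real (n - t) * real (m - s) * real s
      - real s * real (n - s) * real (m - t) * real t
      = real s * real t * (real t - real s) * (real n - real m)"
    unfolding casts by (simp add: algebra_simps)
  moreover have "real s * real t * (real t - real s) * (real n - real m) > 0"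
    using assms by simp
  ultimately have "M_quotient_root n m t s < M_quotient_root n m s t"
    unfolding M_quotient_root_def by (intro larger_root_strict_mono) auto
  then show ?thesis using assms by (simp add: rho_M_adj)
qed

lemma rho_M_adj_shift_lt:
  assumes "0 < s" "s \<le> t" "t + 1 < n"
  shows "rho (M_adj n (n - 1) s t) < rho (M_adj n (n - 1) (t + 1) (s - 1))"
proof -
  have casts: "real (n - s) = real n - real s" "real (n - (t + 1)) = real n - real t - 1"
    "real (n - 1 - t) = real n - real t - 1" "real (n - 1 - (s - 1)) = real n - real s"
    "real (s - 1) = real s - 1"
    using assms by (simp_all add: of_nat_diff)
  have "real (n - 1 - (s - 1)) * (real (t + 1) + real (n - (t + 1))) + real (s - 1) * real (n - (t + 1))
      = real (n - 1 - t) * (real s + real (n - s)) + real t * real (n - s) + (real t - real s + 1)"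
    unfolding casts by (simp add: algebra_simps)
  moreover have "real s * real (n - s) * real (n - 1 - t) * real t
      - real (t + 1) * real (n - (t + 1)) * real (n - 1 - (s - 1)) * real (s - 1)
      = (real n - real s) * (real n - real t - 1) * (real t - real s + 1)"
    unfolding casts by (simp add: algebra_simps)
  moreover have "(real n - real s) * (real n - real t - 1) * (real t - real s + 1) > 0"
    using assms by simp
  moreover have "real s \<le> real t" using assms by simp
  ultimately have "M_quotient_root n (n - 1) s t < M_quotient_root n (n - 1) (t + 1) (s - 1)"
    unfolding M_quotient_root_def by (intro larger_root_strict_mono; (linarith | simp))
  then show ?thesis using assms by (simp add: rho_M_adj)
qed

theorem lemma5p1:
  fixes p k n :: nat
  shows "(k \<ge> p + 1 \<and> n + p \<ge> 2 * k + 2 \<longrightarrow>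
            rho (M_adj n (n - 1) (k - p) (n - k - 1)) > rho (M_adj n (n - 1) (n - k - 1) (k - p)))
       \<and> (k \<ge> p + 2 \<and> n + p \<ge> 2 * k + 2 \<longrightarrow>
            rho (M_adj n (n - 1) (n - k) (k - p - 1)) > rho (M_adj n (n - 1) (k - p) (n - k - 1)))"
proof (intro conjI impI)
  assume "k \<ge> p + 1 \<and> n + p \<ge> 2 * k + 2"
  then show "rho (M_adj n (n - 1) (k - p) (n - k - 1)) > rho (M_adj n (n - 1) (n - k - 1) (k - p))"
    by (intro rho_M_adj_swap_lt) auto
next
  assume h: "k \<ge> p + 2 \<and> n + p \<ge> 2 * k + 2"
  then have "rho (M_adj n (n - 1) (k - p) (n - k - 1))
      < rho (M_adj n (n - 1) ((n - k - 1) + 1) ((k - p) - 1))"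
    by (intro rho_M_adj_shift_lt) auto
  moreover have "(n - k - 1) + 1 = n - k" "(k - p) - 1 = k - p - 1" using h by auto
  ultimately show "rho (M_adj n (n - 1) (n - k) (k - p - 1)) > rho (M_adj n (n - 1) (k - p) (n - k - 1))"
    by simp
qed

end
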